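(* Let $\phi:\mathbb{R}^n\to\mathbb{R}\cup\{+\infty\}$ be $m_\phi$-weakly convex (possibly nonsmooth) and let $g:\mathbb{R}^n\to\mathbb{R}\cup\{+\infty\}$ be proper, closed and convex; set $\Psi:=\phi-g$. For $0<\mu<1/m_\phi$ define $\Psi_\mu(\bm z):=\mathcal{M}_{\mu\phi}(\bm z)-\mathcal{M}_{\mu g}(\bm z)$, which is continuously differentiable. Let $\varepsilon>0$ and $0<\mu<1/m_\phi$. If $\bar{\bm z}\in\mathbb{R}^n$ satisfies $\|\nabla\Psi_\mu(\bar{\bm z})\|\le\min\{1,\mu^{-1}\}\varepsilon$, then $\bar{\bm x}:=\mathrm{prox}_{\mu\phi}(\bar{\bm z})$ is an $\varepsilon$-critical point of $\Psi$ with auxiliary point $\bar{\bm y}:=\mathrm{prox}_{\mu g}(\bar{\bm z})$, i.e. there exists $\bar{\bm u}\in\partial\phi(\bar{\bm x})-\partial g(\bar{\bm y})$ with $\max\{\|\bar{\bm u}\|,\|\bar{\bm x}-\bar{\bm y}\|\}\le\varepsilon$.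
   Context: A function $\phi$ is $m_\phi$-weakly convex if $\phi+\frac{m_\phi}{2}\|\cdot\|^2$ is convex. For a function $\varphi$ and $\mu>0$, the Moreau envelope and proximal mapping are $\mathcal{M}_{\mu\varphi}(\bm z):=\min_{\bm x}\{\varphi(\bm x)+\frac{1}{2\mu}\|\bm x-\bm z\|^2\}$ and $\mathrm{prox}_{\mu\varphi}(\bm z):=\arg\min_{\bm x}\{\varphi(\bm x)+\frac{1}{2\mu}\|\bm x-\bm z\|^2\}$ (well-defined and single-valued for $\mu\in(0,1/m_\phi)$ in the weakly convex case). $\partial$ denotes the general (limiting) subdifferential, which coincides with the convex subdifferential for convex functions. A point $\bar{\bm x}$ is an $\varepsilon$-critical point of $\Psi=\phi-g$ if there exist $\bar{\bm y}\in\mathbb{R}^n$ and $\bar{\bm u}\in\partial\phi(\bar{\bm x})-\partial g(\bar{\bm y})$ with $\max\{\|\bar{\bm u}\|,\|\bar{\bm x}-\bar{\bm y}\|\}\le\varepsilon$. Norms are Euclidean. *)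

theory Defs
  imports "HOL-Analysis.Analysis"
begin

text \<open>Extended-real-valued functions on a Euclidean space (R^n), values in R \<union> {+\<infinity>}
  are modelled as ereal-valued functions that never take the value -\<infinity>.\<close>

definition proper_fun :: "('a \<Rightarrow> ereal) \<Rightarrow> bool" where
  "proper_fun f \<longleftrightarrow> (\<forall>x. f x \<noteq> -\<infinity>) \<and> (\<exists>x. f x < \<infinity>)"

definition epigraph :: "('a \<Rightarrow> ereal) \<Rightarrow> ('a \<times> real) set" where
  "epigraph f = {(x, t). f x \<le> ereal t}"

definition convex_fun :: "('a::real_vector \<Rightarrow> ereal) \<Rightarrow> bool" where
  "convex_fun f \<longleftrightarrow> convex (epigraph f)"

definition closed_fun :: "('a::topological_space \<Rightarrow> ereal) \<Rightarrow> bool" where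
  "closed_fun f \<longleftrightarrow> closed (epigraph f)"

definition weakly_convex :: "real \<Rightarrow> ('a::real_normed_vector \<Rightarrow> ereal) \<Rightarrow> bool" where
  "weakly_convex m f \<longleftrightarrow> convex_fun (\<lambda>x. f x + ereal (m / 2 * (norm x)\<^sup>2))"

definition moreau_env :: "real \<Rightarrow> ('a::real_normed_vector \<Rightarrow> ereal) \<Rightarrow> 'a \<Rightarrow> ereal" where
  "moreau_env \<mu> f z = (INF x. f x + ereal ((norm (x - z))\<^sup>2 / (2 * \<mu>)))"

definition is_prox :: "real \<Rightarrow> ('a::real_normed_vector \<Rightarrow> ereal) \<Rightarrow> 'a \<Rightarrow> 'a \<Rightarrow> bool" where
  "is_prox \<mu> f z x \<longleftrightarrow>
     (\<forall>y. f x + ereal ((norm (x - z))\<^sup>2 / (2 * \<mu>)) \<le> f y + ereal ((norm (y - z))\<^sup>2 / (2 * \<mu>)))"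

text \<open>Frechet (regular) subdifferential: liminf_{y \<rightarrow> x} (f y - f x - <v,y-x>)/|y-x| \<ge> 0.\<close>
definition frechet_subdiff :: "('a::real_inner \<Rightarrow> ereal) \<Rightarrow> 'a \<Rightarrow> 'a set" where
  "frechet_subdiff f x = {v. \<bar>f x\<bar> \<noteq> \<infinity> \<and>
     (\<forall>e>0. \<exists>d>0. \<forall>y. norm (y - x) < d \<longrightarrow>
        f x + ereal (v \<bullet> (y - x) - e * norm (y - x)) \<le> f y)}"

definition limiting_subdiff :: "('a::real_inner \<Rightarrow> ereal) \<Rightarrow> 'a \<Rightarrow> 'a set" where
  "limiting_subdiff f x = {v. \<bar>f x\<bar> \<noteq> \<infinity> \<and>
     (\<exists>xs vs. xs \<longlonglongrightarrow> x \<and> (\<lambda>k. f (xs k)) \<longlonglongrightarrow> f x \<and>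
        (\<forall>k. vs k \<in> frechet_subdiff f (xs k)) \<and> vs \<longlonglongrightarrow> v)}"

definition eps_critical ::
  "('a::real_inner \<Rightarrow> ereal) \<Rightarrow> ('a \<Rightarrow> ereal) \<Rightarrow> real \<Rightarrow> 'a \<Rightarrow> 'a \<Rightarrow> bool" where
  "eps_critical \<phi> g \<epsilon> x y \<longleftrightarrow>
     (\<exists>u. u \<in> {v - w | v w. v \<in> limiting_subdiff \<phi> x \<and> w \<in> limiting_subdiff g y} \<and>
          max (norm u) (norm (x - y)) \<le> \<epsilon>)"

end

theory Submission
  imports Defs
begin

text \<open>Optimality of the proximal points makes (z - x)/\<mu> a Frechet subgradient of \<phi> at
  x = prox \<phi> z and (z - y)/\<mu> one of g at y = prox g z; their difference is u = (y - x)/\<mu>,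
  and norm (x - y) = \<mu> norm u. So it suffices to show that u is the gradient of \<Psi>_\<mu> at z.
  Freezing the minimiser y bounds the envelope of g at z + h from above by a quadratic in h,
  while the strong convexity of \<phi> + norm (\<cdot> - z)^2/(2\<mu>), with modulus 1/\<mu> - m > 0, bounds the
  envelope of \<phi> from below by a quadratic with the same linear part. Hence
  \<Psi>_\<mu>(z + h) - \<Psi>_\<mu>(z) \<ge> u \<bullet> h - K norm h^2, and a function differentiable at z with such a
  minorant has gradient u there.\<close>

lemma norm_midpoint_diff_sq:
  fixes x y v :: "'a::real_inner"
  shows "(norm ((x + y) /\<^sub>R 2 - v))\<^sup>2 = ((norm (x - v))\<^sup>2 + (norm (y - v))\<^sup>2) / 2 - (norm (x - y))\<^sup>2 / 4"
  by (simp add: power2_norm_eq_inner inner_add_left inner_add_right inner_diff_left inner_diff_right field_simps)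

lemma norm_diff_add_sq:
  fixes x z h :: "'a::real_inner"
  shows "(norm (x - (z + h)))\<^sup>2 = (norm (x - z))\<^sup>2 - 2 * ((x - z) \<bullet> h) + (norm h)\<^sup>2"
  by (simp add: power2_norm_eq_inner inner_diff_left inner_diff_right inner_add_right inner_commute)

lemma quadratic_ge_neg_discriminant:
  fixes c b t :: real
  assumes "c > 0"
  shows "c * t\<^sup>2 - b * t \<ge> - (b\<^sup>2 / (4 * c))"
proof -
  have "0 \<le> (2 * c * t - b)\<^sup>2 / (4 * c)" using assms by simp
  also have "\<dots> = c * t\<^sup>2 - b * t + b\<^sup>2 / (4 * c)"
    using assms by (simp add: field_simps power2_eq_square)
  finally show ?thesis by linarith
qed

lemma convex_funD:
  assumes "convex_fun f" "f x \<le> ereal r" "f y \<le> ereal s" "0 \<le> t" "t \<le> 1"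
  shows "f ((1 - t) *\<^sub>R x + t *\<^sub>R y) \<le> ereal ((1 - t) * r + t * s)"
proof -
  have "(1 - t) *\<^sub>R (x, r) + t *\<^sub>R (y, s) \<in> epigraph f"
    using assms unfolding convex_fun_def by (intro convexD) (auto simp: epigraph_def)
  then show ?thesis by (simp add: epigraph_def)
qed

lemma is_prox_finite:
  assumes "proper_fun f" "is_prox \<mu> f z x"
  shows "\<bar>f x\<bar> \<noteq> \<infinity>"
proof -
  obtain x0 where "f x0 < \<infinity>" using assms(1) unfolding proper_fun_def by auto
  moreover have "f x + ereal ((norm (x - z))\<^sup>2 / (2 * \<mu>)) \<le> f x0 + ereal ((norm (x0 - z))\<^sup>2 / (2 * \<mu>))"
    using assms(2) unfolding is_prox_def by blast
  ultimately have "f x < \<infinity>" by (cases "f x"; cases "f x0") auto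
  moreover have "f x \<noteq> -\<infinity>" using assms(1) unfolding proper_fun_def by auto
  ultimately show ?thesis by (cases "f x") auto
qed

lemma moreau_env_at_prox:
  assumes "is_prox \<mu> f z x"
  shows "moreau_env \<mu> f z = f x + ereal ((norm (x - z))\<^sup>2 / (2 * \<mu>))"
  unfolding moreau_env_def
  using assms unfolding is_prox_def by (intro antisym INF_lower INF_greatest) auto

lemma is_prox_frechet_subdiff:
  fixes f :: "'a::real_inner \<Rightarrow> ereal"
  assumes "proper_fun f" "is_prox \<mu> f z x" "\<mu> > 0"
  shows "(z - x) /\<^sub>R \<mu> \<in> frechet_subdiff f x"
proof -
  have fin: "\<bar>f x\<bar> \<noteq> \<infinity>" using is_prox_finite[OF assms(1,2)] .
  then obtain r where r: "f x = ereal r" by (cases "f x") auto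
  have "f x + ereal (((z - x) /\<^sub>R \<mu>) \<bullet> (y - x) - e * norm (y - x)) \<le> f y"
    if e: "e > 0" and y: "norm (y - x) < 2 * \<mu> * e" for e y
  proof (cases "f y")
    case (real s)
    have "r + (norm (x - z))\<^sup>2 / (2 * \<mu>) \<le> s + (norm (y - z))\<^sup>2 / (2 * \<mu>)"
      using assms(2) r real unfolding is_prox_def by (metis plus_ereal.simps(1) ereal_less_eq(3))
    moreover have "(norm (y - z))\<^sup>2 / (2 * \<mu>)
        = (norm (x - z))\<^sup>2 / (2 * \<mu>) - ((z - x) /\<^sub>R \<mu>) \<bullet> (y - x) + (norm (y - x))\<^sup>2 / (2 * \<mu>)"
    proof -
      have "((z - x) /\<^sub>R \<mu>) \<bullet> (y - x) = ((y - x) \<bullet> (z - x)) / \<mu>"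
        by (simp add: inner_commute divide_inverse_commute)
      then show ?thesis
        using norm_diff_add_sq[of y x "z - x"] assms(3)
        by (simp add: norm_minus_commute add_divide_distrib diff_divide_distrib)
    qed
    moreover have "(norm (y - x))\<^sup>2 / (2 * \<mu>) \<le> e * norm (y - x)"
    proof -
      have "norm (y - x) * norm (y - x) \<le> (2 * \<mu> * e) * norm (y - x)"
        using y by (intro mult_right_mono) auto
      then show ?thesis using assms(3) by (simp add: field_simps power2_eq_square)
    qed
    ultimately show ?thesis using r real by simp
  qed (use r assms(1) in \<open>auto simp: proper_fun_def\<close>)
  then show ?thesis
    unfolding frechet_subdiff_def using fin assms(3) by (auto intro!: exI[of _ "2 * \<mu> * _"])
qed

lemma frechet_subdiff_subset_limiting_subdiff:
  "frechet_subdiff f x \<subseteq> limiting_subdiff f x"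
  unfolding limiting_subdiff_def
  by (auto intro!: exI[of _ "\<lambda>k. x"] exI[of _ "\<lambda>k. _"] simp: frechet_subdiff_def)

lemma weakly_convex_prox_quadratic_growth:
  fixes f :: "'a::real_inner \<Rightarrow> ereal"
  assumes "weakly_convex a f" "proper_fun f" "is_prox \<mu> f z x" "\<mu> > 0"
  shows "moreau_env \<mu> f z + ereal ((1 - a * \<mu>) / (4 * \<mu>) * (norm (y - x))\<^sup>2)
           \<le> f y + ereal ((norm (y - z))\<^sup>2 / (2 * \<mu>))"
proof (cases "f y")
  case (real s)
  obtain r where r: "f x = ereal r" using is_prox_finite[OF assms(2,3)] by (cases "f x") auto
  define mid where "mid = (y + x) /\<^sub>R 2"
  define B where "B v = (norm (v - z))\<^sup>2 / (2 * \<mu>)" for v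
  define Q where "Q v = a / 2 * (norm (v :: 'a))\<^sup>2" for v
  \<comment> \<open>\<open>f + B\<close> is strongly convex with modulus \<open>(1 - a\<mu>)/\<mu>\<close>; midpoint convexity retains a quarter of it.\<close>
  define C where "C = (1 - a * \<mu>) / (4 * \<mu>) * (norm (y - x))\<^sup>2"
  have "f mid + ereal (Q mid) \<le> ereal ((s + Q y + (r + Q x)) / 2)"
    using convex_funD[of "\<lambda>v. f v + ereal (Q v)" y "s + Q y" x "r + Q x" "1 / 2"] assms(1) real r
    unfolding weakly_convex_def mid_def Q_def by (simp add: scaleR_add_right add_divide_distrib)
  moreover have "f mid \<noteq> -\<infinity>" using assms(2) unfolding proper_fun_def by auto
  ultimately obtain rm where rm: "f mid = ereal rm" and "rm + Q mid \<le> (s + Q y + (r + Q x)) / 2"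
    by (cases "f mid") auto
  moreover have "r + B x \<le> rm + B mid"
    using assms(3) r rm unfolding is_prox_def B_def by (metis plus_ereal.simps(1) ereal_less_eq(3))
  moreover have "B mid - Q mid = (B y - Q y + (B x - Q x)) / 2 - C / 2"
  proof -
    have mid_z: "(norm (mid - z))\<^sup>2 = ((norm (y - z))\<^sup>2 + (norm (x - z))\<^sup>2) / 2 - (norm (y - x))\<^sup>2 / 4"
      unfolding mid_def by (rule norm_midpoint_diff_sq)
    have mid_0: "(norm mid)\<^sup>2 = ((norm y)\<^sup>2 + (norm x)\<^sup>2) / 2 - (norm (y - x))\<^sup>2 / 4"
      using norm_midpoint_diff_sq[of y x 0] unfolding mid_def by simp
    show ?thesis
      unfolding B_def Q_def C_def mid_z mid_0 using assms(4) by (simp add: field_simps)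
  qed
  ultimately have "r + B x + C \<le> s + B y" by argo
  then show ?thesis using moreau_env_at_prox[OF assms(3)] r real unfolding B_def C_def by simp
qed (use assms(2) in \<open>auto simp: proper_fun_def\<close>)

lemma moreau_env_shift_upper:
  fixes f :: "'a::real_inner \<Rightarrow> ereal"
  assumes "is_prox \<mu> f z x" "\<mu> > 0"
  shows "moreau_env \<mu> f (z + h) \<le> moreau_env \<mu> f z + ereal ((z - x) \<bullet> h / \<mu> + (norm h)\<^sup>2 / (2 * \<mu>))"
proof -
  have "moreau_env \<mu> f (z + h) \<le> f x + ereal ((norm (x - (z + h)))\<^sup>2 / (2 * \<mu>))"
    unfolding moreau_env_def by (rule INF_lower) simp
  also have "(norm (x - (z + h)))\<^sup>2 / (2 * \<mu>)
      = (norm (x - z))\<^sup>2 / (2 * \<mu>) + ((z - x) \<bullet> h / \<mu> + (norm h)\<^sup>2 / (2 * \<mu>))"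
    unfolding norm_diff_add_sq using assms(2) by (simp add: field_simps inner_diff_left)
  finally show ?thesis
    unfolding moreau_env_at_prox[OF assms(1)] by (simp add: add.assoc)
qed

lemma moreau_env_shift_lower:
  fixes f :: "'a::real_inner \<Rightarrow> ereal"
  assumes "weakly_convex a f" "proper_fun f" "is_prox \<mu> f z x" "\<mu> > 0" "a * \<mu> < 1"
  shows "moreau_env \<mu> f z + ereal ((z - x) \<bullet> h / \<mu> + (norm h)\<^sup>2 / (2 * \<mu>) - (norm h)\<^sup>2 / (\<mu> * (1 - a * \<mu>)))
           \<le> moreau_env \<mu> f (z + h)"
proof -
  obtain m0 where m0: "moreau_env \<mu> f z = ereal m0"
    using moreau_env_at_prox[OF assms(3)] is_prox_finite[OF assms(2,3)] by (cases "f x") auto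
  define c where "c = (1 - a * \<mu>) / (4 * \<mu>)"
  have c: "c > 0" using assms(4,5) unfolding c_def by simp
  have "ereal (m0 + ((z - x) \<bullet> h / \<mu> + (norm h)\<^sup>2 / (2 * \<mu>) - (norm h)\<^sup>2 / (\<mu> * (1 - a * \<mu>))))
          \<le> f y + ereal ((norm (y - (z + h)))\<^sup>2 / (2 * \<mu>))" for y
  proof (cases "f y")
    case (real s)
    have "m0 + c * (norm (y - x))\<^sup>2 \<le> s + (norm (y - z))\<^sup>2 / (2 * \<mu>)"
      using weakly_convex_prox_quadratic_growth[OF assms(1-4), of y] m0 real unfolding c_def by simp
    moreover have "(norm (y - (z + h)))\<^sup>2 / (2 * \<mu>)
        = (norm (y - z))\<^sup>2 / (2 * \<mu>) - (y - x) \<bullet> h / \<mu> + (z - x) \<bullet> h / \<mu> + (norm h)\<^sup>2 / (2 * \<mu>)"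
      unfolding norm_diff_add_sq using assms(4) by (simp add: field_simps inner_diff_left)
    moreover have "(y - x) \<bullet> h / \<mu> \<le> norm h / \<mu> * norm (y - x)"
      using norm_cauchy_schwarz[of "y - x" h] assms(4) by (simp add: divide_right_mono mult.commute)
    moreover have "c * (norm (y - x))\<^sup>2 - norm h / \<mu> * norm (y - x) \<ge> - ((norm h / \<mu>)\<^sup>2 / (4 * c))"
      using quadratic_ge_neg_discriminant[OF c] .
    moreover have "(norm h / \<mu>)\<^sup>2 / (4 * c) = (norm h)\<^sup>2 / (\<mu> * (1 - a * \<mu>))"
      using assms(4,5) unfolding c_def by (simp add: divide_simps power2_eq_square)
    ultimately show ?thesis using real by simp
  qed (use assms(2) in \<open>auto simp: proper_fun_def\<close>)
  then show ?thesis
    unfolding m0 moreau_env_def[of \<mu> f "z + h"] by (simp add: INF_greatest)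
qed

lemma real_moreau_env_shift_bounds:
  fixes f :: "'a::real_inner \<Rightarrow> ereal"
  assumes "weakly_convex a f" "proper_fun f" "is_prox \<mu> f z x" "\<mu> > 0" "a * \<mu> < 1"
  shows "real_of_ereal (moreau_env \<mu> f z) + (z - x) \<bullet> h / \<mu> + (norm h)\<^sup>2 / (2 * \<mu>)
           - (norm h)\<^sup>2 / (\<mu> * (1 - a * \<mu>)) \<le> real_of_ereal (moreau_env \<mu> f (z + h))"
    and "real_of_ereal (moreau_env \<mu> f (z + h))
           \<le> real_of_ereal (moreau_env \<mu> f z) + (z - x) \<bullet> h / \<mu> + (norm h)\<^sup>2 / (2 * \<mu>)"
proof -
  obtain m0 where m0: "moreau_env \<mu> f z = ereal m0"
    using moreau_env_at_prox[OF assms(3)] is_prox_finite[OF assms(2,3)] by (cases "f x") auto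
  note lower = moreau_env_shift_lower[OF assms, of h] and upper = moreau_env_shift_upper[OF assms(3,4), of h]
  show "real_of_ereal (moreau_env \<mu> f z) + (z - x) \<bullet> h / \<mu> + (norm h)\<^sup>2 / (2 * \<mu>)
           - (norm h)\<^sup>2 / (\<mu> * (1 - a * \<mu>)) \<le> real_of_ereal (moreau_env \<mu> f (z + h))"
    using lower upper unfolding m0 by (cases "moreau_env \<mu> f (z + h)") auto
  show "real_of_ereal (moreau_env \<mu> f (z + h))
           \<le> real_of_ereal (moreau_env \<mu> f z) + (z - x) \<bullet> h / \<mu> + (norm h)\<^sup>2 / (2 * \<mu>)"
    using lower upper unfolding m0 by (cases "moreau_env \<mu> f (z + h)") auto
qed

lemma has_derivative_eq_of_quadratic_minorant:
  fixes f :: "'a::real_inner \<Rightarrow> real"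
  assumes deriv: "(f has_derivative (\<lambda>h. G \<bullet> h)) (at z)"
    and minorant: "\<And>h. f (z + h) - f z \<ge> w \<bullet> h - K * (norm h)\<^sup>2"
  shows "G = w"
proof -
  define q where "q y = f y - w \<bullet> (y - z) + K * ((y - z) \<bullet> (y - z))" for y
  have "(q has_derivative (\<lambda>h. (G - w) \<bullet> h)) (at z)"
    unfolding q_def by (auto intro!: derivative_eq_intros deriv simp: inner_diff_left)
  moreover have "q z \<le> q y" for y
    using minorant[of "y - z"] by (simp add: q_def power2_norm_eq_inner)
  ultimately have "(\<lambda>h. (G - w) \<bullet> h) = (\<lambda>h. 0)"
    by (intro has_derivative_local_min) auto
  then have "(G - w) \<bullet> (G - w) = 0" by metis
  then show ?thesis by simp
qed

lemma moreau_env_diff_quadratic_minorant: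
  fixes \<phi> g :: "'a::real_inner \<Rightarrow> ereal"
  assumes "weakly_convex m \<phi>" "proper_fun \<phi>" "is_prox \<mu> \<phi> z x"
    and "convex_fun g" "proper_fun g" "is_prox \<mu> g z y"
    and "\<mu> > 0" "m * \<mu> < 1"
  defines "\<Psi> \<equiv> \<lambda>z. real_of_ereal (moreau_env \<mu> \<phi> z) - real_of_ereal (moreau_env \<mu> g z)"
  shows "\<Psi> (z + h) - \<Psi> z \<ge> ((y - x) /\<^sub>R \<mu>) \<bullet> h - 1 / (\<mu> * (1 - m * \<mu>)) * (norm h)\<^sup>2"
proof -
  have "weakly_convex 0 g" using assms(4) by (simp add: weakly_convex_def)
  note env_\<phi> = real_moreau_env_shift_bounds(1)[OF assms(1-3,7,8), of h]
    and env_g = real_moreau_env_shift_bounds(2)[OF this assms(5-7), of h]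
  have "((y - x) /\<^sub>R \<mu>) \<bullet> h = (z - x) \<bullet> h / \<mu> - (z - y) \<bullet> h / \<mu>"
    using assms(7) by (simp add: inner_diff_left field_simps)
  then show ?thesis using env_\<phi> env_g unfolding \<Psi>_def by simp
qed

lemma is_prox_diff_in_limiting_subdiff_diff:
  fixes \<phi> g :: "'a::real_inner \<Rightarrow> ereal"
  assumes "proper_fun \<phi>" "is_prox \<mu> \<phi> z x" "proper_fun g" "is_prox \<mu> g z y" "\<mu> > 0"
  shows "(y - x) /\<^sub>R \<mu> \<in> {v - w | v w. v \<in> limiting_subdiff \<phi> x \<and> w \<in> limiting_subdiff g y}"
proof -
  have "(y - x) /\<^sub>R \<mu> = (z - x) /\<^sub>R \<mu> - (z - y) /\<^sub>R \<mu>" by (simp add: algebra_simps)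
  then show ?thesis
    using is_prox_frechet_subdiff[OF assms(1,2,5)] is_prox_frechet_subdiff[OF assms(3,4,5)]
      frechet_subdiff_subset_limiting_subdiff by blast
qed

theorem proposition2p1:
  fixes \<phi> g :: "'a::euclidean_space \<Rightarrow> ereal"
    and m \<mu> \<epsilon> :: real and zbar xbar ybar G :: 'a
  assumes "m \<ge> 0" and "weakly_convex m \<phi>" and "proper_fun \<phi>"
    and "proper_fun g" and "closed_fun g" and "convex_fun g"
    and "\<epsilon> > 0" and "\<mu> > 0" and "m * \<mu> < 1"
    and "((\<lambda>z. real_of_ereal (moreau_env \<mu> \<phi> z) - real_of_ereal (moreau_env \<mu> g z))
           has_derivative (\<lambda>h. G \<bullet> h)) (at zbar)"
    and "norm G \<le> min 1 (1 / \<mu>) * \<epsilon>"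
    and "is_prox \<mu> \<phi> zbar xbar" and "is_prox \<mu> g zbar ybar"
  shows "eps_critical \<phi> g \<epsilon> xbar ybar"
proof -
  have G_eq: "G = (ybar - xbar) /\<^sub>R \<mu>"
    by (rule has_derivative_eq_of_quadratic_minorant[OF assms(10)
          moreau_env_diff_quadratic_minorant[OF assms(2,3,12,6,4,13,8,9)]])
  have "norm G \<le> \<epsilon>" and "norm G \<le> \<epsilon> / \<mu>"
    using order.trans[OF assms(11) mult_right_mono[OF min.cobounded1]]
      order.trans[OF assms(11) mult_right_mono[OF min.cobounded2]] \<open>\<epsilon> > 0\<close>
    by auto
  moreover have "norm (xbar - ybar) = \<mu> * norm G"
    unfolding G_eq using \<open>\<mu> > 0\<close> by (simp add: norm_minus_commute)
  ultimately show ?thesis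
    using is_prox_diff_in_limiting_subdiff_diff[OF assms(3,12,4,13,8)] \<open>\<mu> > 0\<close>
    unfolding eps_critical_def G_eq[symmetric] by (intro exI[of _ G] conjI) (auto simp: field_simps)
qed

end
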